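(* Let $\beta=(\beta_1,\ldots,\beta_\ell)$ be a composition of $N$ and $\mathcal{P}$ a subposet of the total order $1<\cdots<\ell$. The following are equivalent: (P1) $\mathcal{P}$ is a normal subposet of $1<\cdots<\ell$ (i.e. $(\beta,\mathcal{P})$ is a unipotent polytope); (P2) $\mathrm{fat}_\beta(\mathcal{P})$ is a normal (and Levi compatible) subposet of $\mathcal{Q}_\beta$; (P3) $P_\beta\subseteq N_{\mathrm{GL}_N}(\mathrm{UT}_{(\beta,\mathcal{P})})$.
   Context: Fix a prime power $q$; $\mathrm{GL}_N=\mathrm{GL}_N(\mathbb{F}_q)$. A subposet of a poset $(X,\prec_{\mathcal{R}})$ is a strict partial order $\prec_{\mathcal{P}}$ on the same set with $a\prec_{\mathcal{P}}b\Rightarrow a\prec_{\mathcal{R}}b$; it is normal if $j\prec_{\mathcal{P}}k$ implies $i\prec_{\mathcal{P}}k$ and $j\prec_{\mathcal{P}}l$ for all $i\prec_{\mathcal{R}}j$, $k\prec_{\mathcal{R}}l$. For a subposet $\mathcal{R}$ of $1<\cdots<N$, $\mathfrak{ut}_{\mathcal{R}}=\{x\in M_N(\mathbb{F}_q)\mid x_{ab}\neq0\Rightarrow a\prec_{\mathcal{R}}b\}$, $\mathrm{UT}_{\mathcal{R}}=\mathrm{Id}_N+\mathfrak{ut}_{\mathcal{R}}$. For a composition $\beta$ of $N$ with $\ell$ parts, $\mathcal{Q}_i=\{\beta_1+\cdots+\beta_{i-1}+1,\ldots,\beta_1+\cdots+\beta_i\}$; $\mathcal{Q}_\beta$ is the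 poset on $\{1,\ldots,N\}$ with $a\prec b$ iff $a\in\mathcal{Q}_i,b\in\mathcal{Q}_j,i<j$; $\mathrm{UT}_\beta=\mathrm{UT}_{\mathcal{Q}_\beta}$; $L_\beta$ is the block-diagonal subgroup $\mathrm{GL}_{\beta_1}\times\cdots\times\mathrm{GL}_{\beta_\ell}$ (blocks indexed by the $\mathcal{Q}_i$); $P_\beta=L_\beta\ltimes\mathrm{UT}_\beta$ (invertible block upper triangular matrices). A subposet $\mathcal{R}$ of $\mathcal{Q}_\beta$ is Levi compatible if $L_\beta\subseteq N_{\mathrm{GL}_N}(\mathrm{UT}_{\mathcal{R}})$. For a subposet $\mathcal{P}$ of $1<\cdots<\ell$, $\mathrm{fat}_\beta(\mathcal{P})$ is the poset on $\{1,\ldots,N\}$ with $a\prec b$ iff $a\in\mathcal{Q}_i,b\in\mathcal{Q}_j$ with $i\prec_{\mathcal{P}}j$, and $\mathrm{UT}_{(\beta,\mathcal{P})}=\mathrm{UT}_{\mathrm{fat}_\beta(\mathcal{P})}$. *)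

theory Defs
  imports "Jordan_Normal_Form.Matrix"
begin

definition chain_order :: "nat \<Rightarrow> (nat \<times> nat) set" where
  "chain_order n = {(a, b). 1 \<le> a \<and> a < b \<and> b \<le> n}"

definition is_subposet :: "nat set \<Rightarrow> (nat \<times> nat) set \<Rightarrow> (nat \<times> nat) set \<Rightarrow> bool" where
  "is_subposet X R P \<longleftrightarrow> P \<subseteq> X \<times> X \<and> irrefl P \<and> trans P \<and> P \<subseteq> R"

definition is_normal_subposet :: "nat set \<Rightarrow> (nat \<times> nat) set \<Rightarrow> (nat \<times> nat) set \<Rightarrow> bool" where
  "is_normal_subposet X R P \<longleftrightarrow> is_subposet X R P \<and>
     (\<forall>i j k l. (j, k) \<in> P \<longrightarrow>
        ((i, j) \<in> R \<longrightarrow> (i, k) \<in> P) \<and> ((k, l) \<in> R \<longrightarrow> (j, l) \<in> P))"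

definition is_composition :: "nat list \<Rightarrow> nat \<Rightarrow> bool" where
  "is_composition \<beta> N \<longleftrightarrow> (\<forall>b \<in> set \<beta>. 0 < b) \<and> sum_list \<beta> = N"

text \<open>The i-th block (1-indexed) of the composition.\<close>
definition block :: "nat list \<Rightarrow> nat \<Rightarrow> nat set" where
  "block \<beta> i = {sum_list (take (i - 1) \<beta>) + 1 .. sum_list (take i \<beta>)}"

definition Q_order :: "nat list \<Rightarrow> (nat \<times> nat) set" where
  "Q_order \<beta> = {(a, b). \<exists>i j. 1 \<le> i \<and> i < j \<and> j \<le> length \<beta> \<and>
                      a \<in> block \<beta> i \<and> b \<in> block \<beta> j}"

definition fat :: "nat list \<Rightarrow> (nat \<times> nat) set \<Rightarrow> (nat \<times> nat) set" where
  "fat \<beta> P = {(a, b). \<exists>i j. (i, j) \<in> P \<and> a \<in> block \<beta> i \<and> b \<in> block \<beta> j}"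

text \<open>Matrices are 0-indexed in Jordan_Normal_Form: entry (a,b) of the paper
  is entry (a-1,b-1) here.\<close>

definition GL :: "nat \<Rightarrow> 'a::field mat set" where
  "GL N = {g \<in> carrier_mat N N. invertible_mat g}"

definition ut_lie :: "nat \<Rightarrow> (nat \<times> nat) set \<Rightarrow> 'a::field mat set" where
  "ut_lie N R = {x \<in> carrier_mat N N. \<forall>a < N. \<forall>b < N.
                   x $$ (a, b) \<noteq> 0 \<longrightarrow> (a + 1, b + 1) \<in> R}"

definition UT :: "nat \<Rightarrow> (nat \<times> nat) set \<Rightarrow> 'a::field mat set" where
  "UT N R = {1\<^sub>m N + x | x. x \<in> ut_lie N R}"

definition normalizer :: "nat \<Rightarrow> 'a::field mat set \<Rightarrow> 'a mat set" where
  "normalizer N H = {g \<in> GL N. (\<lambda>h. g * h) ` H = (\<lambda>h. h * g) ` H}"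

definition Levi :: "nat list \<Rightarrow> 'a::field mat set" where
  "Levi \<beta> = {g \<in> GL (sum_list \<beta>). \<forall>a < sum_list \<beta>. \<forall>b < sum_list \<beta>.
     g $$ (a, b) \<noteq> 0 \<longrightarrow> (\<exists>i. a + 1 \<in> block \<beta> i \<and> b + 1 \<in> block \<beta> i)}"

definition Parabolic :: "nat list \<Rightarrow> 'a::field mat set" where
  "Parabolic \<beta> = {g \<in> GL (sum_list \<beta>). \<forall>a < sum_list \<beta>. \<forall>b < sum_list \<beta>.
     g $$ (a, b) \<noteq> 0 \<longrightarrow> (\<exists>i j. i \<le> j \<and> a + 1 \<in> block \<beta> i \<and> b + 1 \<in> block \<beta> j)}"

definition levi_compatible :: "'a::field itself \<Rightarrow> nat list \<Rightarrow> (nat \<times> nat) set \<Rightarrow> bool" where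
  "levi_compatible _ \<beta> R \<longleftrightarrow>
     (Levi \<beta> :: 'a mat set) \<subseteq> normalizer (sum_list \<beta>) (UT (sum_list \<beta>) R :: 'a mat set)"

end

(*
  For the chain C = (1 < ... < l), normality of P means C O P \<subseteq> P and P O C \<subseteq> P. Since all
  blocks of \<beta> are nonempty, fattening commutes with relational composition, reflects
  inclusion, and sends C to Q_\<beta>; this gives the equivalence with normality of fat \<beta> P.

  A block upper triangular g is supported on fat \<beta> (C\<^sup>=), and the support of a product lies
  in the composite of the supports. So for normal P, left and right multiplication by g map
  the matrices supported on fat \<beta> P into themselves; over a finite field they are then
  bijections, whence g * UT = UT * g. Conversely, if the transvection 1 + E_pq (p in an
  earlier block than q) normalizes UT and 1 + E_qr \<in> UT, then writing
  (1 + E_pq)(1 + E_qr) = v (1 + E_pq) forces v_pr = 1, so (p, r) is in the support;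
  symmetrically for 1 + E_qr acting on 1 + E_pq. The Levi subgroup lies in the parabolic one.
*)

theory Submission
  imports Defs "HOL-Library.FuncSet" "Jordan_Normal_Form.Column_Operations"
begin

lemma sum_list_take_mono: "i \<le> j \<Longrightarrow> sum_list (take i (xs :: nat list)) \<le> sum_list (take j xs)"
  by (metis le_add1 le_Suc_ex sum_list_append take_add)

lemma sum_list_take_le: "sum_list (take i (xs :: nat list)) \<le> sum_list xs"
  by (metis append_take_drop_id le_add1 sum_list_append)

lemma block_less: "a \<in> block \<beta> i \<Longrightarrow> b \<in> block \<beta> j \<Longrightarrow> i < j \<Longrightarrow> a < b"
  using sum_list_take_mono[of i "j - 1" \<beta>] by (fastforce simp: block_def)

lemma block_unique: "a \<in> block \<beta> i \<Longrightarrow> a \<in> block \<beta> j \<Longrightarrow> i = j"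
  using block_less[of a \<beta> i a j] block_less[of a \<beta> j a i] by (cases i j rule: linorder_cases) auto

lemma block_index_range: "a \<in> block \<beta> i \<Longrightarrow> i \<in> {1..length \<beta>}"
  by (cases "i = 0"; cases "length \<beta> < i") (auto simp: block_def)

lemma block_subset: "block \<beta> i \<subseteq> {1..sum_list \<beta>}"
  using sum_list_take_le[of i \<beta>] by (auto simp: block_def)

lemma block_exists:
  assumes "a \<in> {1..sum_list \<beta>}"
  shows "\<exists>i. a \<in> block \<beta> i"
proof -
  let ?covers = "\<lambda>i. a \<le> sum_list (take i \<beta>)"
  define i where "i = (LEAST i. ?covers i)"
  have "?covers (length \<beta>)" using assms by simp
  then have upper: "?covers i"
    unfolding i_def by (rule LeastI)
  then have "i \<noteq> 0" using assms by (cases "i = 0") auto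
  then have "\<not> ?covers (i - 1)"
    unfolding i_def by (intro not_less_Least) (simp add: i_def)
  then have "a \<in> block \<beta> i" using upper by (auto simp: block_def)
  then show ?thesis ..
qed

lemma block_nonempty:
  assumes "\<forall>b \<in> set \<beta>. 0 < b" and "i \<in> {1..length \<beta>}"
  shows "\<exists>p < sum_list \<beta>. p + 1 \<in> block \<beta> i"
proof -
  obtain k where k: "i = Suc k" "k < length \<beta>" using assms(2) by (cases i) auto
  then have "take i \<beta> = take k \<beta> @ [\<beta> ! k]" by (simp add: take_Suc_conv_app_nth)
  moreover have "0 < \<beta> ! k" using assms(1) k by auto
  ultimately have "sum_list (take i \<beta>) \<in> block \<beta> i" using k by (auto simp: block_def)
  moreover have "0 < sum_list (take i \<beta>)" using calculation by (auto simp: block_def)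
  ultimately show ?thesis
    using block_subset[of \<beta> i] by (intro exI[of _ "sum_list (take i \<beta>) - 1"]) auto
qed

lemma block_representatives:
  assumes "\<forall>b \<in> set \<beta>. 0 < b" and "1 \<le> i" "i < j" "j < k" "k \<le> length \<beta>"
  obtains p q r where "p + 1 \<in> block \<beta> i" "q + 1 \<in> block \<beta> j" "r + 1 \<in> block \<beta> k"
    and "p < q" "q < r" "r < sum_list \<beta>"
proof -
  obtain p q r where "p + 1 \<in> block \<beta> i" "q + 1 \<in> block \<beta> j" "r + 1 \<in> block \<beta> k" "r < sum_list \<beta>"
    using block_nonempty[OF assms(1), of i] block_nonempty[OF assms(1), of j]
      block_nonempty[OF assms(1), of k] assms(2-) by fastforce
  moreover have "p < q" "q < r" using block_less calculation assms(3,4) by fastforce+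
  ultimately show ?thesis using that by blast
qed

lemma fat_block_iff:
  "a \<in> block \<beta> i \<Longrightarrow> b \<in> block \<beta> j \<Longrightarrow> (a, b) \<in> fat \<beta> P \<longleftrightarrow> (i, j) \<in> P"
  unfolding fat_def using block_unique by blast

lemma fat_mono: "A \<subseteq> B \<Longrightarrow> fat \<beta> A \<subseteq> fat \<beta> B"
  unfolding fat_def by blast

lemma fat_subset_fat_iff:
  assumes "\<forall>b \<in> set \<beta>. 0 < b" and "A \<subseteq> {1..length \<beta>} \<times> {1..length \<beta>}"
  shows "fat \<beta> A \<subseteq> fat \<beta> B \<longleftrightarrow> A \<subseteq> B"
proof
  assume fat_sub: "fat \<beta> A \<subseteq> fat \<beta> B"
  show "A \<subseteq> B"
  proof (rule subrelI)
    fix i j assume ij: "(i, j) \<in> A"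
    obtain p q where "p + 1 \<in> block \<beta> i" "q + 1 \<in> block \<beta> j"
      using block_nonempty[OF assms(1)] ij assms(2) by blast
    then show "(i, j) \<in> B" using ij fat_sub fat_block_iff by blast
  qed
qed (rule fat_mono)

lemma fat_relcomp_subset: "fat \<beta> A O fat \<beta> B \<subseteq> fat \<beta> (A O B)"
  unfolding fat_def using block_unique by blast

lemma fat_relcomp:
  assumes "\<forall>b \<in> set \<beta>. 0 < b" and "Range A \<subseteq> {1..length \<beta>}"
  shows "fat \<beta> A O fat \<beta> B = fat \<beta> (A O B)"
proof
  show "fat \<beta> (A O B) \<subseteq> fat \<beta> A O fat \<beta> B"
  proof (rule subrelI)
    fix a c assume "(a, c) \<in> fat \<beta> (A O B)"
    then obtain i j k where ijk: "(i, j) \<in> A" "(j, k) \<in> B" "a \<in> block \<beta> i" "c \<in> block \<beta> k"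
      by (auto simp: fat_def)
    obtain q where "q + 1 \<in> block \<beta> j"
      using block_nonempty[OF assms(1)] ijk(1) assms(2) by blast
    then show "(a, c) \<in> fat \<beta> A O fat \<beta> B" using ijk fat_block_iff by blast
  qed
qed (rule fat_relcomp_subset)

lemma Q_order_eq_fat: "Q_order \<beta> = fat \<beta> (chain_order (length \<beta>))"
  unfolding Q_order_def fat_def chain_order_def by blast

lemma is_normal_subposet_iff_relcomp:
  "is_normal_subposet X R P \<longleftrightarrow> is_subposet X R P \<and> R O P \<subseteq> P \<and> P O R \<subseteq> P"
  unfolding is_normal_subposet_def by blast

lemma fat_subposet:
  assumes "is_subposet {1..length \<beta>} (chain_order (length \<beta>)) P"
  shows "is_subposet {1..sum_list \<beta>} (Q_order \<beta>) (fat \<beta> P)"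
  unfolding is_subposet_def
proof (intro conjI)
  have P: "P \<subseteq> chain_order (length \<beta>)" "irrefl P" "trans P"
    using assms by (auto simp: is_subposet_def)
  show "fat \<beta> P \<subseteq> {1..sum_list \<beta>} \<times> {1..sum_list \<beta>}"
    using block_subset unfolding fat_def by blast
  show "irrefl (fat \<beta> P)"
    using P(2) block_unique unfolding irrefl_def fat_def by blast
  show "trans (fat \<beta> P)"
  proof -
    have "fat \<beta> P O fat \<beta> P \<subseteq> fat \<beta> P"
      using fat_relcomp_subset fat_mono[OF trans_O_subset[OF P(3)]] by (rule order_trans)
    then show ?thesis unfolding trans_def by blast
  qed
  show "fat \<beta> P \<subseteq> Q_order \<beta>"
    unfolding Q_order_eq_fat using P(1) by (rule fat_mono)
qed

lemma fat_normal_iff: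
  assumes pos: "\<forall>b \<in> set \<beta>. 0 < b"
    and sub: "is_subposet {1..length \<beta>} (chain_order (length \<beta>)) P"
  shows "is_normal_subposet {1..sum_list \<beta>} (Q_order \<beta>) (fat \<beta> P)
     \<longleftrightarrow> is_normal_subposet {1..length \<beta>} (chain_order (length \<beta>)) P"
proof -
  let ?C = "chain_order (length \<beta>)"
  have C: "?C \<subseteq> {1..length \<beta>} \<times> {1..length \<beta>}" by (auto simp: chain_order_def)
  have P: "P \<subseteq> ?C" using sub by (simp add: is_subposet_def)
  have "Q_order \<beta> O fat \<beta> P = fat \<beta> (?C O P)"
    unfolding Q_order_eq_fat using C by (intro fat_relcomp[OF pos]) blast
  moreover have "fat \<beta> P O Q_order \<beta> = fat \<beta> (P O ?C)"
    unfolding Q_order_eq_fat using C P by (intro fat_relcomp[OF pos]) blast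
  moreover have "fat \<beta> (?C O P) \<subseteq> fat \<beta> P \<longleftrightarrow> ?C O P \<subseteq> P"
    using C P by (intro fat_subset_fat_iff[OF pos]) blast
  moreover have "fat \<beta> (P O ?C) \<subseteq> fat \<beta> P \<longleftrightarrow> P O ?C \<subseteq> P"
    using C P by (intro fat_subset_fat_iff[OF pos]) blast
  ultimately show ?thesis
    using fat_subposet[OF sub] sub by (simp add: is_normal_subposet_iff_relcomp)
qed

lemma mult_mat_nonzero_entryE:
  fixes A B :: "'a::semiring_0 mat"
  assumes "A \<in> carrier_mat nr n" "B \<in> carrier_mat n nc" "a < nr" "b < nc"
    and "(A * B) $$ (a, b) \<noteq> 0"
  obtains c where "c < n" "A $$ (a, c) \<noteq> 0" "B $$ (c, b) \<noteq> 0"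
proof -
  have "(\<Sum>c < n. A $$ (a, c) * B $$ (c, b)) \<noteq> 0"
    using assms by (simp add: scalar_prod_def atLeast0LessThan)
  then show ?thesis using that by (metis (no_types, lifting) mult_not_zero sum.neutral lessThan_iff)
qed

lemma ut_lie_mono: "R \<subseteq> S \<Longrightarrow> ut_lie N R \<subseteq> ut_lie N S"
  unfolding ut_lie_def by blast

lemma ut_lie_mult:
  assumes x: "x \<in> ut_lie N R" and y: "y \<in> ut_lie N S"
  shows "x * y \<in> ut_lie N (R O S)"
proof -
  have xy: "x \<in> carrier_mat N N" "y \<in> carrier_mat N N" using x y by (auto simp: ut_lie_def)
  have "(a + 1, b + 1) \<in> R O S" if ab: "a < N" "b < N" "(x * y) $$ (a, b) \<noteq> 0" for a b
  proof -
    obtain c where "c < N" "x $$ (a, c) \<noteq> 0" "y $$ (c, b) \<noteq> 0"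
      using mult_mat_nonzero_entryE[OF xy ab] .
    then have "(a + 1, c + 1) \<in> R" "(c + 1, b + 1) \<in> S"
      using x y ab by (auto simp: ut_lie_def)
    then show ?thesis by (rule relcompI)
  qed
  then show ?thesis using xy by (auto simp: ut_lie_def)
qed

lemma UT_eq_image: "UT N R = (\<lambda>x. 1\<^sub>m N + x) ` ut_lie N R"
  unfolding UT_def by blast

lemma mem_UT_iff:
  "u \<in> UT N R \<longleftrightarrow> u \<in> carrier_mat N N \<and>
     (\<forall>a < N. \<forall>b < N. u $$ (a, b) \<noteq> 1\<^sub>m N $$ (a, b) \<longrightarrow> (a + 1, b + 1) \<in> R)"
proof
  assume "u \<in> UT N R"
  then obtain x where "x \<in> ut_lie N R" "u = 1\<^sub>m N + x" by (auto simp: UT_def)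
  then show "u \<in> carrier_mat N N \<and>
     (\<forall>a < N. \<forall>b < N. u $$ (a, b) \<noteq> 1\<^sub>m N $$ (a, b) \<longrightarrow> (a + 1, b + 1) \<in> R)"
    by (auto simp: ut_lie_def)
next
  assume u: "u \<in> carrier_mat N N \<and>
     (\<forall>a < N. \<forall>b < N. u $$ (a, b) \<noteq> 1\<^sub>m N $$ (a, b) \<longrightarrow> (a + 1, b + 1) \<in> R)"
  then have "u - 1\<^sub>m N \<in> ut_lie N R" by (auto simp: ut_lie_def)
  moreover have "u = 1\<^sub>m N + (u - 1\<^sub>m N)" using u by (intro eq_matI) auto
  ultimately show "u \<in> UT N R" unfolding UT_def by blast
qed

lemma finite_carrier_mat: "finite (carrier_mat n m :: 'a::finite mat set)"
proof -
  let ?D = "{0..<n} \<times> {0..<m} \<rightarrow>\<^sub>E (UNIV :: 'a set)"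
  have "carrier_mat n m \<subseteq> (\<lambda>f. mat n m f) ` ?D"
  proof
    fix A :: "'a mat" assume A: "A \<in> carrier_mat n m"
    have "A = mat n m (restrict (\<lambda>ij. A $$ ij) ({0..<n} \<times> {0..<m}))"
      using A by (intro eq_matI) auto
    moreover have "restrict (\<lambda>ij. A $$ ij) ({0..<n} \<times> {0..<m}) \<in> ?D" by simp
    ultimately show "A \<in> (\<lambda>f. mat n m f) ` ?D" by (rule image_eqI)
  qed
  moreover have "finite ?D" by (intro finite_PiE) simp_all
  ultimately show ?thesis by (meson finite_imageI finite_subset)
qed

lemma GL_mult_inj_on:
  assumes g: "g \<in> GL N" and M: "M \<subseteq> carrier_mat N N"
  shows "inj_on (\<lambda>x. g * x) M" and "inj_on (\<lambda>x. x * g) M"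
proof -
  obtain h where "inverts_mat g h" "inverts_mat h g" and gc: "g \<in> carrier_mat N N"
    using g by (auto simp: GL_def invertible_mat_def)
  then have h: "h \<in> carrier_mat N N" "h * g = 1\<^sub>m N" "g * h = 1\<^sub>m N"
    unfolding inverts_mat_def by (metis carrier_matD carrier_matI index_mult_mat(2,3) index_one_mat(2,3))+
  show "inj_on (\<lambda>x. g * x) M"
    by (rule inj_on_inverseI[of _ "\<lambda>y. h * y"]) (use M gc h in \<open>auto simp flip: assoc_mult_mat\<close>)
  show "inj_on (\<lambda>x. x * g) M"
    by (rule inj_on_inverseI[of _ "\<lambda>y. y * h"]) (use M gc h in \<open>auto\<close>)
qed

text \<open>Finiteness of the field makes the injective maps \<open>x \<mapsto> g * x\<close> and \<open>x \<mapsto> x * g\<close>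
  permutations of \<open>ut_lie N R\<close>.\<close>
lemma normalizer_UT_if_closed:
  fixes g :: "'a::{field, finite} mat"
  assumes g: "g \<in> GL N"
    and left: "(\<lambda>x. g * x) ` ut_lie N R \<subseteq> ut_lie N R"
    and right: "(\<lambda>x. x * g) ` ut_lie N R \<subseteq> ut_lie N R"
  shows "g \<in> normalizer N (UT N R)"
proof -
  let ?M = "ut_lie N R :: 'a mat set"
  have M: "?M \<subseteq> carrier_mat N N" by (auto simp: ut_lie_def)
  have gc: "g \<in> carrier_mat N N" using g by (simp add: GL_def)
  have fin: "finite ?M" using finite_subset[OF M finite_carrier_mat] .
  have distrib: "g * (1\<^sub>m N + x) = g + g * x" "(1\<^sub>m N + x) * g = g + x * g" if "x \<in> ?M" for x
    using that M gc mult_add_distrib_mat[OF gc, of "1\<^sub>m N" N x]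
      add_mult_distrib_mat[of "1\<^sub>m N" N N x g N] by auto
  have "(\<lambda>u. g * u) ` UT N R = (\<lambda>z. g + z) ` ((\<lambda>x. g * x) ` ?M)"
    unfolding UT_eq_image image_image
    by (intro image_cong refl) (simp add: distrib)
  also have "(\<lambda>x. g * x) ` ?M = (\<lambda>x. x * g) ` ?M"
    using endo_inj_surj[OF fin left GL_mult_inj_on(1)[OF g M]]
      endo_inj_surj[OF fin right GL_mult_inj_on(2)[OF g M]] by simp
  also have "(\<lambda>z. g + z) ` ((\<lambda>x. x * g) ` ?M) = (\<lambda>u. u * g) ` UT N R"
    unfolding UT_eq_image image_image
    by (intro image_cong refl) (simp add: distrib)
  finally show ?thesis using g unfolding normalizer_def by blast
qed

lemma fat_reflcl_chain_order:
  "fat \<beta> ((chain_order (length \<beta>))\<^sup>=) = {(a, b). \<exists>i j. i \<le> j \<and> a \<in> block \<beta> i \<and> b \<in> block \<beta> j}"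
proof -
  have "(i, j) \<in> (chain_order (length \<beta>))\<^sup>= \<longleftrightarrow> i \<le> j" if "a \<in> block \<beta> i" "b \<in> block \<beta> j" for a b i j
    using block_index_range[OF that(1)] block_index_range[OF that(2)] by (auto simp: chain_order_def)
  then show ?thesis unfolding fat_def by blast
qed

lemma Parabolic_eq:
  "Parabolic \<beta> = GL (sum_list \<beta>) \<inter> ut_lie (sum_list \<beta>) (fat \<beta> ((chain_order (length \<beta>))\<^sup>=))"
  unfolding Parabolic_def ut_lie_def fat_reflcl_chain_order GL_def by auto

lemma Levi_subset_Parabolic: "Levi \<beta> \<subseteq> Parabolic \<beta>"
  unfolding Levi_def Parabolic_def by blast

lemma addrow_mat_GL:
  assumes "k < n" "l < n" "k \<noteq> l"
  shows "addrow_mat n (a :: 'a::field) k l \<in> GL n"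
proof -
  have "addrow_mat n a k l * addrow_mat n (- a) k l = 1\<^sub>m n"
    "addrow_mat n (- a) k l * addrow_mat n a k l = 1\<^sub>m n"
    using addrow_mat_inv[OF assms, of a] addrow_mat_inv[OF assms, of "- a"] by simp_all
  then show ?thesis unfolding GL_def invertible_mat_def inverts_mat_def
    by (intro CollectI conjI exI[of _ "addrow_mat n (- a) k l"]) auto
qed

lemma addrow_mat_Parabolic:
  assumes p: "p + 1 \<in> block \<beta> i" and q: "q + 1 \<in> block \<beta> j" and "i < j"
  shows "addrow_mat (sum_list \<beta>) (a :: 'a::field) p q \<in> Parabolic \<beta>"
proof -
  let ?N = "sum_list \<beta>" and ?C = "chain_order (length \<beta>)"
  have "p < ?N" "q < ?N" using p q block_subset by fastforce+
  moreover have "p < q" using block_less[OF p q \<open>i < j\<close>] by simp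
  ultimately have GL: "addrow_mat ?N a p q \<in> GL ?N" by (intro addrow_mat_GL) simp_all
  have "(b + 1, c + 1) \<in> fat \<beta> (?C\<^sup>=)"
    if "b < ?N" "c < ?N" "addrow_mat ?N a p q $$ (b, c) \<noteq> 0" for b c
  proof (cases "b = c")
    case True
    then show ?thesis using block_exists[of "b + 1" \<beta>] that(1) fat_block_iff by fastforce
  next
    case False
    then have "b = p" "c = q" using that by (auto split: if_splits)
    moreover have "(i, j) \<in> ?C"
      using block_index_range[OF p] block_index_range[OF q] \<open>i < j\<close> by (auto simp: chain_order_def)
    ultimately show ?thesis using p q fat_block_iff by blast
  qed
  then show ?thesis using GL by (auto simp: Parabolic_eq ut_lie_def)
qed

text \<open>The matrix \<open>addrow_mat N 1 p q\<close> is the transvection \<open>1 + E_pq\<close>; multiplying by it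
  adds row \<open>q\<close> to row \<open>p\<close> on the left and column \<open>p\<close> to column \<open>q\<close> on the right.\<close>

lemma normalizer_UT_addrow_left:
  assumes g: "addrow_mat N (1 :: 'a::field) p q \<in> normalizer N (UT N R)"
    and R: "(q + 1, r + 1) \<in> R"
    and "p < N" "q < N" "r < N" "p \<noteq> q" "q \<noteq> r" "p \<noteq> r"
  shows "(p + 1, r + 1) \<in> R"
proof -
  let ?g = "addrow_mat N (1 :: 'a) p q" and ?u = "addrow_mat N (1 :: 'a) q r"
  have "?u \<in> UT N R" using R by (auto simp: mem_UT_iff)
  then obtain v where v: "v \<in> UT N R" "?g * ?u = v * ?g"
    using g unfolding normalizer_def by blast
  have vc: "v \<in> carrier_mat N N" using v(1) by (simp add: mem_UT_iff)
  have "(?g * ?u) $$ (p, r) = 1"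
    using assms by (simp add: addrow_mat[of ?u N N q, symmetric])
  moreover have "(v * ?g) $$ (p, r) = v $$ (p, r)"
    using assms vc by (simp add: addcol_mat[OF vc, symmetric])
  ultimately show ?thesis using v assms by (auto simp: mem_UT_iff)
qed

lemma normalizer_UT_addrow_right:
  assumes g: "addrow_mat N (1 :: 'a::field) q r \<in> normalizer N (UT N R)"
    and R: "(p + 1, q + 1) \<in> R"
    and "p < N" "q < N" "r < N" "p \<noteq> q" "q \<noteq> r" "p \<noteq> r"
  shows "(p + 1, r + 1) \<in> R"
proof -
  let ?g = "addrow_mat N (1 :: 'a) q r" and ?u = "addrow_mat N (1 :: 'a) p q"
  have "?u \<in> UT N R" using R by (auto simp: mem_UT_iff)
  then obtain v where v: "v \<in> UT N R" "?g * ?u = v * ?g"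
    using g unfolding normalizer_def by blast
  have vc: "v \<in> carrier_mat N N" using v(1) by (simp add: mem_UT_iff)
  have "(?g * ?u) $$ (p, q) = 1" "(?g * ?u) $$ (p, r) = 0"
    using assms by (simp_all add: addrow_mat[of ?u N N r, symmetric])
  moreover have "(v * ?g) $$ (p, q) = v $$ (p, q)" "(v * ?g) $$ (p, r) = v $$ (p, q) + v $$ (p, r)"
    using assms vc by (simp_all add: addcol_mat[OF vc, symmetric])
  ultimately have "v $$ (p, r) = - 1" using v(2) by (metis add_eq_0_iff)
  then show ?thesis using v assms by (auto simp: mem_UT_iff)
qed

lemma normal_if_Parabolic_normalizes:
  assumes pos: "\<forall>b \<in> set \<beta>. 0 < b"
    and sub: "is_subposet {1..length \<beta>} (chain_order (length \<beta>)) P"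
    and H: "(Parabolic \<beta> :: 'a::field mat set) \<subseteq> normalizer (sum_list \<beta>) (UT (sum_list \<beta>) (fat \<beta> P))"
  shows "is_normal_subposet {1..length \<beta>} (chain_order (length \<beta>)) P"
proof -
  let ?C = "chain_order (length \<beta>)" and ?N = "sum_list \<beta>"
  have P: "1 \<le> j \<and> j < k \<and> k \<le> length \<beta>" if "(j, k) \<in> P" for j k
    using sub that by (auto simp: is_subposet_def chain_order_def)
  have "(i, k) \<in> P" if C: "(i, j) \<in> ?C" and jk: "(j, k) \<in> P" for i j k
  proof -
    obtain p q r where pqr: "p + 1 \<in> block \<beta> i" "q + 1 \<in> block \<beta> j" "r + 1 \<in> block \<beta> k"
      "p < q" "q < r" "r < ?N"
      using block_representatives[OF pos, of i j k] C P[OF jk] by (auto simp: chain_order_def)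
    have "addrow_mat ?N (1 :: 'a) p q \<in> normalizer ?N (UT ?N (fat \<beta> P))"
      using H addrow_mat_Parabolic[OF pqr(1,2)] C by (auto simp: chain_order_def)
    moreover have "(q + 1, r + 1) \<in> fat \<beta> P" using pqr jk fat_block_iff by blast
    ultimately have "(p + 1, r + 1) \<in> fat \<beta> P"
      by (rule normalizer_UT_addrow_left) (use pqr in auto)
    then show ?thesis using pqr fat_block_iff by blast
  qed
  moreover have "(j, l) \<in> P" if jk: "(j, k) \<in> P" and C: "(k, l) \<in> ?C" for j k l
  proof -
    obtain p q r where pqr: "p + 1 \<in> block \<beta> j" "q + 1 \<in> block \<beta> k" "r + 1 \<in> block \<beta> l"
      "p < q" "q < r" "r < ?N"
      using block_representatives[OF pos, of j k l] C P[OF jk] by (auto simp: chain_order_def)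
    have "addrow_mat ?N (1 :: 'a) q r \<in> normalizer ?N (UT ?N (fat \<beta> P))"
      using H addrow_mat_Parabolic[OF pqr(2,3)] C by (auto simp: chain_order_def)
    moreover have "(p + 1, q + 1) \<in> fat \<beta> P" using pqr jk fat_block_iff by blast
    ultimately have "(p + 1, r + 1) \<in> fat \<beta> P"
      by (rule normalizer_UT_addrow_right) (use pqr in auto)
    then show ?thesis using pqr fat_block_iff by blast
  qed
  ultimately show ?thesis using sub by (auto simp: is_normal_subposet_iff_relcomp)
qed

lemma Parabolic_normalizes_UT_fat:
  assumes "is_normal_subposet {1..length \<beta>} (chain_order (length \<beta>)) P"
  shows "(Parabolic \<beta> :: 'a::{field, finite} mat set) \<subseteq> normalizer (sum_list \<beta>) (UT (sum_list \<beta>) (fat \<beta> P))"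
proof
  let ?C = "chain_order (length \<beta>)" and ?N = "sum_list \<beta>"
  fix g :: "'a mat" assume "g \<in> Parabolic \<beta>"
  then have g: "g \<in> GL ?N" "g \<in> ut_lie ?N (fat \<beta> (?C\<^sup>=))" by (auto simp: Parabolic_eq)
  have "?C\<^sup>= O P \<subseteq> P" "P O ?C\<^sup>= \<subseteq> P"
    using assms by (auto simp: is_normal_subposet_iff_relcomp)
  then have "fat \<beta> (?C\<^sup>=) O fat \<beta> P \<subseteq> fat \<beta> P" "fat \<beta> P O fat \<beta> (?C\<^sup>=) \<subseteq> fat \<beta> P"
    by (meson fat_mono fat_relcomp_subset order_trans)+
  then show "g \<in> normalizer ?N (UT ?N (fat \<beta> P))"
    using ut_lie_mult[OF g(2)] ut_lie_mult[OF _ g(2)] ut_lie_mono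
    by (intro normalizer_UT_if_closed[OF g(1)]) blast+
qed

theorem mainTheorem4:
  fixes \<beta> :: "nat list" and N :: nat and P :: "(nat \<times> nat) set"
    and F :: "'a::{field, finite} itself"
  assumes comp: "is_composition \<beta> N"
    and sub: "is_subposet {1..length \<beta>} (chain_order (length \<beta>)) P"
  shows "(is_normal_subposet {1..length \<beta>} (chain_order (length \<beta>)) P
            \<longleftrightarrow> (is_normal_subposet {1..N} (Q_order \<beta>) (fat \<beta> P)
                 \<and> levi_compatible F \<beta> (fat \<beta> P)))
       \<and> (is_normal_subposet {1..length \<beta>} (chain_order (length \<beta>)) P
            \<longleftrightarrow> (Parabolic \<beta> :: 'a mat set) \<subseteq> normalizer N (UT N (fat \<beta> P)))"
proof -
  let ?normal = "is_normal_subposet {1..length \<beta>} (chain_order (length \<beta>)) P"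
  have N: "sum_list \<beta> = N" and pos: "\<forall>b \<in> set \<beta>. 0 < b"
    using comp by (auto simp: is_composition_def)
  have fat: "is_normal_subposet {1..N} (Q_order \<beta>) (fat \<beta> P) \<longleftrightarrow> ?normal"
    using fat_normal_iff[OF pos sub] N by simp
  have parabolic: "(Parabolic \<beta> :: 'a mat set) \<subseteq> normalizer N (UT N (fat \<beta> P)) \<longleftrightarrow> ?normal"
    using Parabolic_normalizes_UT_fat normal_if_Parabolic_normalizes[OF pos sub] N by blast
  have "levi_compatible F \<beta> (fat \<beta> P)" if ?normal
    using parabolic that Levi_subset_Parabolic N unfolding levi_compatible_def by blast
  then show ?thesis using fat parabolic by blast
qed

end
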